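(* Let $G$ be a finite nonabelian group and suppose $Z_2=Z(G)$, where $Z_2/Z(G)=Z(G/Z(G))$. Then: (1) $K(G)$ is the intersection of all noncentral normal subgroups of $G$ (i.e. normal subgroups not contained in $Z(G)$); (2) $K(G)\not\le Z(G)$ if and only if $G$ has a unique subgroup $N$ that is minimal among the noncentral normal subgroups of $G$.
   Context: All groups are finite. For $\chi\in\mathrm{Irr}(G)$, the center of $\chi$ is $Z(\chi)=\{g\in G : |\chi(g)|=\chi(1)\}$; equivalently $Z(\chi)/\ker(\chi)=Z(G/\ker(\chi))$. For a nonabelian group $G$, let $\mathcal{X}=\{\chi\in\mathrm{Irr}(G) : Z(\chi)>Z(G)\}$ (strict containment) and define $K(G)=\bigcap_{\chi\in\mathcal{X}}\ker(\chi)$. If $G$ is abelian, set $K(G)=G$. *)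

theory Defs
  imports "HOL-Algebra.Coset" "Jordan_Normal_Form.Matrix"
begin

definition grp_center :: "('a, 'b) monoid_scheme \<Rightarrow> 'a set" where
  "grp_center G = {z \<in> carrier G. \<forall>x \<in> carrier G. x \<otimes>\<^bsub>G\<^esub> z = z \<otimes>\<^bsub>G\<^esub> x}"

definition second_center :: "('a, 'b) monoid_scheme \<Rightarrow> 'a set" where
  "second_center G = {g \<in> carrier G. grp_center G #>\<^bsub>G\<^esub> g \<in> grp_center (G Mod grp_center G)}"

definition mat_trace :: "complex mat \<Rightarrow> complex" where
  "mat_trace A = (\<Sum>i<dim_row A. A $$ (i, i))"

definition is_rep :: "('a, 'b) monoid_scheme \<Rightarrow> nat \<Rightarrow> ('a \<Rightarrow> complex mat) \<Rightarrow> bool" where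
  "is_rep G n \<rho> \<longleftrightarrow>
     (\<forall>g \<in> carrier G. \<rho> g \<in> carrier_mat n n) \<and>
     \<rho> \<one>\<^bsub>G\<^esub> = 1\<^sub>m n \<and>
     (\<forall>g \<in> carrier G. \<forall>h \<in> carrier G. \<rho> (g \<otimes>\<^bsub>G\<^esub> h) = \<rho> g * \<rho> h)"

definition invariant_subspace :: "('a, 'b) monoid_scheme \<Rightarrow> nat \<Rightarrow> ('a \<Rightarrow> complex mat) \<Rightarrow> complex vec set \<Rightarrow> bool" where
  "invariant_subspace G n \<rho> W \<longleftrightarrow>
     W \<subseteq> carrier_vec n \<and> 0\<^sub>v n \<in> W \<and>
     (\<forall>v \<in> W. \<forall>w \<in> W. v + w \<in> W) \<and>
     (\<forall>c. \<forall>v \<in> W. c \<cdot>\<^sub>v v \<in> W) \<and>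
     (\<forall>g \<in> carrier G. \<forall>v \<in> W. \<rho> g *\<^sub>v v \<in> W)"

definition irr_rep :: "('a, 'b) monoid_scheme \<Rightarrow> nat \<Rightarrow> ('a \<Rightarrow> complex mat) \<Rightarrow> bool" where
  "irr_rep G n \<rho> \<longleftrightarrow> is_rep G n \<rho> \<and> n > 0 \<and>
     (\<forall>W. invariant_subspace G n \<rho> W \<longrightarrow> W = {0\<^sub>v n} \<or> W = carrier_vec n)"

definition irr_char :: "('a, 'b) monoid_scheme \<Rightarrow> ('a \<Rightarrow> complex) \<Rightarrow> bool" where
  "irr_char G \<chi> \<longleftrightarrow> (\<exists>n \<rho>. irr_rep G n \<rho> \<and> (\<forall>g \<in> carrier G. \<chi> g = mat_trace (\<rho> g)))"

definition char_ker :: "('a, 'b) monoid_scheme \<Rightarrow> ('a \<Rightarrow> complex) \<Rightarrow> 'a set" where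
  "char_ker G \<chi> = {g \<in> carrier G. \<chi> g = \<chi> \<one>\<^bsub>G\<^esub>}"

definition char_center :: "('a, 'b) monoid_scheme \<Rightarrow> ('a \<Rightarrow> complex) \<Rightarrow> 'a set" where
  "char_center G \<chi> = {g \<in> carrier G. complex_of_real (cmod (\<chi> g)) = \<chi> \<one>\<^bsub>G\<^esub>}"

definition K_grp :: "('a, 'b) monoid_scheme \<Rightarrow> 'a set" where
  "K_grp G = (if grp_center G = carrier G then carrier G
     else carrier G \<inter> \<Inter> {char_ker G \<chi> | \<chi>. irr_char G \<chi> \<and> grp_center G \<subset> char_center G \<chi>})"

end

theory Submission
  imports Defs "Jordan_Normal_Form.Spectral_Radius" "HOL-Algebra.Multiplicative_Group"
begin

(* Let \<chi> \<in> Irr(G) with Z(\<chi>) > Z(G) and pick g \<in> Z(\<chi>) outside Z(G). A representation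
   affording \<chi> maps g to a scalar, because a complex matrix of finite order whose trace has
   modulus equal to its size is scalar. Since Z_2 = Z(G), some commutator of g lies outside Z(G);
   it acts trivially, so ker \<chi> contains a noncentral normal subgroup. Conversely, if N is a
   noncentral normal subgroup and g \<notin> N, an irreducible constituent of the permutation
   representation on G/N that moves g has a character \<chi> with N \<subseteq> Z(\<chi>), Z(G) \<subseteq> Z(\<chi>)
   (Schur's lemma) and g \<notin> ker \<chi>. This gives (1); then (2) only concerns the finite family of
   noncentral normal subgroups: its intersection is a member iff the family has a unique
   minimal member. *)

lemma index_mult_mat_sum:
  assumes "A \<in> carrier_mat n n" "B \<in> carrier_mat n n" "i < n" "j < n"
  shows "(A * B) $$ (i,j) = (\<Sum>l<n. A $$ (i,l) * B $$ (l,j))"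
  using assms by (auto simp: scalar_prod_def lessThan_atLeast0 intro!: sum.cong)

lemma mat_trace_one: "mat_trace (1\<^sub>m n) = of_nat n"
  unfolding mat_trace_def by simp

lemma mat_trace_smult_one: "mat_trace (c \<cdot>\<^sub>m 1\<^sub>m n) = of_nat n * c"
  unfolding mat_trace_def by simp

lemma mat_trace_mult_comm:
  assumes A: "A \<in> carrier_mat n n" and B: "B \<in> carrier_mat n n"
  shows "mat_trace (A * B) = mat_trace (B * A)"
proof -
  have "mat_trace (A * B) = (\<Sum>i<n. \<Sum>l<n. A $$ (i,l) * B $$ (l,i))"
    unfolding mat_trace_def using A B by (intro sum.cong) (auto simp: index_mult_mat_sum[OF A B, symmetric])
  also have "\<dots> = (\<Sum>l<n. \<Sum>i<n. B $$ (l,i) * A $$ (i,l))"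
    by (subst sum.swap) (simp add: mult.commute)
  also have "\<dots> = mat_trace (B * A)"
    unfolding mat_trace_def using A B by (intro sum.cong) (auto simp: index_mult_mat_sum[OF B A, symmetric])
  finally show ?thesis .
qed

context
  fixes A P P' :: "'a::comm_ring_1 mat" and n :: nat
  assumes A: "A \<in> carrier_mat n n" and P: "P \<in> carrier_mat n n"
    and P': "P' \<in> carrier_mat n n" and PP': "P * P' = 1\<^sub>m n"
begin

lemma conj_mat_cancel: "P * (P' * A * P) * P' = A"
proof -
  have "P * (P' * A * P) * P' = (P * P') * A * (P * P')"
    using A P P' by (simp add: assoc_mult_mat[of _ n n _ n _ n])
  thus ?thesis using PP' A by simp
qed

lemma conj_mat_mult:
  assumes B: "B \<in> carrier_mat n n"
  shows "(P' * A * P) * (P' * B * P) = P' * (A * B) * P"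
proof -
  have "(P' * A * P) * (P' * B * P) = P' * A * ((P * P') * (B * P))"
    using A B P P' by (simp add: assoc_mult_mat[of _ n n _ n _ n])
  thus ?thesis using A B P P' PP' by (simp add: assoc_mult_mat[of _ n n _ n _ n])
qed

end

lemma mat_trace_conj:
  assumes A: "A \<in> carrier_mat n n" and P: "P \<in> carrier_mat n n"
    and P': "P' \<in> carrier_mat n n" and PP': "P * P' = 1\<^sub>m n"
  shows "mat_trace (P' * A * P) = mat_trace A"
proof -
  have "mat_trace ((P' * A) * P) = mat_trace (P * (P' * A))"
    using mat_trace_mult_comm[of "P' * A" n P] P P' A by simp
  also have "P * (P' * A) = (P * P') * A" using P P' A by simp
  finally show ?thesis using PP' A by simp
qed

lemma smult_pow_mat:
  assumes A: "(A :: 'a :: comm_ring_1 mat) \<in> carrier_mat n n"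
  shows "(c \<cdot>\<^sub>m A) ^\<^sub>m r = c ^ r \<cdot>\<^sub>m (A ^\<^sub>m r)"
proof (induction r)
  case 0
  then show ?case using A by auto
next
  case (Suc r)
  have Ar: "A ^\<^sub>m r \<in> carrier_mat n n" using A by simp
  have "(c \<cdot>\<^sub>m A) ^\<^sub>m Suc r = c ^ r \<cdot>\<^sub>m ((A ^\<^sub>m r) * (c \<cdot>\<^sub>m A))"
    using Suc mult_smult_assoc_mat[OF Ar smult_carrier_mat[OF A]] by simp
  also have "\<dots> = c ^ r \<cdot>\<^sub>m (c \<cdot>\<^sub>m ((A ^\<^sub>m r) * A))"
    using mult_smult_distrib[OF Ar A] by simp
  finally show ?case by (auto simp: mult.commute)
qed

lemma one_pow_mat[simp]: "(1\<^sub>m n :: 'a::semiring_1 mat) ^\<^sub>m r = 1\<^sub>m n"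
  by (induction r) auto

lemma scalar_mat_pow_eq_one:
  assumes "(c \<cdot>\<^sub>m 1\<^sub>m n) ^\<^sub>m m = 1\<^sub>m n" and "0 < n"
  shows "c ^ m = (1 :: 'a :: comm_ring_1)"
proof -
  have "c ^ m \<cdot>\<^sub>m 1\<^sub>m n = (1\<^sub>m n :: 'a mat)"
    using assms(1) smult_pow_mat[of "1\<^sub>m n" n c m] by simp
  hence "(c ^ m \<cdot>\<^sub>m 1\<^sub>m n) $$ (0,0) = (1\<^sub>m n :: 'a mat) $$ (0,0)" by simp
  thus ?thesis using assms(2) by simp
qed

lemma norm_eq_1_if_power_eq_1:
  fixes c :: complex
  assumes "c ^ m = 1" "0 < m"
  shows "cmod c = 1"
proof -
  have "cmod c ^ m = 1 ^ m" using assms(1) by (metis norm_one norm_power power_one)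
  thus ?thesis using assms(2) power_eq_imp_eq_base[of "cmod c" m 1] by simp
qed

section \<open>Block upper triangular matrices\<close>

definition upper_left_block :: "nat \<Rightarrow> 'a mat \<Rightarrow> 'a mat" where
  "upper_left_block k A = mat k k (\<lambda>(i,j). A $$ (i,j))"

definition lower_right_block :: "nat \<Rightarrow> nat \<Rightarrow> 'a mat \<Rightarrow> 'a mat" where
  "lower_right_block n k A = mat (n-k) (n-k) (\<lambda>(i,j). A $$ (i+k, j+k))"

definition block_upper_triangular :: "nat \<Rightarrow> nat \<Rightarrow> 'a::zero mat \<Rightarrow> bool" where
  "block_upper_triangular n k A \<longleftrightarrow> (\<forall>i j. k \<le> i \<and> i < n \<and> j < k \<longrightarrow> A $$ (i,j) = 0)"

lemma upper_left_block_carrier[simp]: "upper_left_block k A \<in> carrier_mat k k"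
  unfolding upper_left_block_def by simp

lemma lower_right_block_carrier[simp]: "lower_right_block n k A \<in> carrier_mat (n-k) (n-k)"
  unfolding lower_right_block_def by simp

lemma sum_shift_lessThan:
  "(k::nat) \<le> n \<Longrightarrow> (\<Sum>l\<in>{k..<n}. f l) = (\<Sum>l<n-k. f (l + k))"
  using sum.shift_bounds_nat_ivl[of f 0 k "n-k"] by (simp add: lessThan_atLeast0)

context
  fixes A B :: "'a::comm_ring_1 mat" and n k :: nat
  assumes A: "A \<in> carrier_mat n n" and B: "B \<in> carrier_mat n n" and kn: "k \<le> n"
    and tA: "block_upper_triangular n k A" and tB: "block_upper_triangular n k B"
begin

lemma block_upper_triangular_mult: "block_upper_triangular n k (A * B)"
  unfolding block_upper_triangular_def
proof (intro allI impI)
  fix i j assume ij: "k \<le> i \<and> i < n \<and> j < k"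
  have "(A * B) $$ (i,j) = (\<Sum>l<n. A $$ (i,l) * B $$ (l,j))"
    using index_mult_mat_sum[OF A B] ij kn by simp
  also have "\<dots> = 0"
  proof (rule sum.neutral, intro ballI)
    fix l assume "l \<in> {..<n}"
    thus "A $$ (i,l) * B $$ (l,j) = 0"
      using tA tB ij unfolding block_upper_triangular_def by (cases "l < k") auto
  qed
  finally show "(A * B) $$ (i,j) = 0" .
qed

lemma upper_left_block_mult:
  "upper_left_block k (A * B) = upper_left_block k A * upper_left_block k B"
proof (rule eq_matI)
  fix i j assume "i < dim_row (upper_left_block k A * upper_left_block k B)"
    "j < dim_col (upper_left_block k A * upper_left_block k B)"
  hence ij: "i < k" "j < k" by (auto simp: upper_left_block_def)
  have "upper_left_block k (A * B) $$ (i,j) = (\<Sum>l<n. A $$ (i,l) * B $$ (l,j))"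
    using index_mult_mat_sum[OF A B] ij kn by (simp add: upper_left_block_def)
  also have "\<dots> = (\<Sum>l<k. A $$ (i,l) * B $$ (l,j))"
    by (rule sum.mono_neutral_right) (use kn tB ij in \<open>auto simp: block_upper_triangular_def\<close>)
  also have "\<dots> = (upper_left_block k A * upper_left_block k B) $$ (i,j)"
    using index_mult_mat_sum[of "upper_left_block k A" k "upper_left_block k B"] ij
    by (simp add: upper_left_block_def)
  finally show "upper_left_block k (A * B) $$ (i,j) = (upper_left_block k A * upper_left_block k B) $$ (i,j)" .
qed (auto simp: upper_left_block_def)

lemma lower_right_block_mult:
  "lower_right_block n k (A * B) = lower_right_block n k A * lower_right_block n k B"
proof (rule eq_matI)
  fix i j assume "i < dim_row (lower_right_block n k A * lower_right_block n k B)"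
    "j < dim_col (lower_right_block n k A * lower_right_block n k B)"
  hence ij: "i < n - k" "j < n - k" by (auto simp: lower_right_block_def)
  have "lower_right_block n k (A * B) $$ (i,j) = (\<Sum>l<n. A $$ (i+k,l) * B $$ (l,j+k))"
    using index_mult_mat_sum[OF A B] ij kn by (simp add: lower_right_block_def)
  also have "\<dots> = (\<Sum>l\<in>{k..<n}. A $$ (i+k,l) * B $$ (l,j+k))"
    by (rule sum.mono_neutral_right) (use kn tA ij in \<open>auto simp: block_upper_triangular_def\<close>)
  also have "\<dots> = (\<Sum>l<n-k. A $$ (i+k,l+k) * B $$ (l+k,j+k))"
    using kn by (rule sum_shift_lessThan)
  also have "\<dots> = (lower_right_block n k A * lower_right_block n k B) $$ (i,j)"
    using index_mult_mat_sum[of "lower_right_block n k A" "n-k" "lower_right_block n k B"] ij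
    by (simp add: lower_right_block_def)
  finally show "lower_right_block n k (A * B) $$ (i,j)
      = (lower_right_block n k A * lower_right_block n k B) $$ (i,j)" .
qed (auto simp: lower_right_block_def)

end

lemma block_upper_triangular_one: "block_upper_triangular n k (1\<^sub>m n)"
  unfolding block_upper_triangular_def by auto

lemma upper_left_block_one: "k \<le> n \<Longrightarrow> upper_left_block k (1\<^sub>m n) = 1\<^sub>m k"
  unfolding upper_left_block_def by (rule eq_matI) auto

lemma lower_right_block_one: "lower_right_block n k (1\<^sub>m n) = 1\<^sub>m (n-k)"
  unfolding lower_right_block_def by (rule eq_matI) auto

lemma block_upper_triangular_pow:
  fixes A :: "'a::comm_ring_1 mat"
  assumes A: "A \<in> carrier_mat n n" and kn: "k \<le> n" and tA: "block_upper_triangular n k A"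
  shows "block_upper_triangular n k (A ^\<^sub>m r)
    \<and> upper_left_block k (A ^\<^sub>m r) = upper_left_block k A ^\<^sub>m r
    \<and> lower_right_block n k (A ^\<^sub>m r) = lower_right_block n k A ^\<^sub>m r"
proof (induction r)
  case 0
  then show ?case
    using block_upper_triangular_one[of n k] upper_left_block_one[OF kn] lower_right_block_one[of n k] A
    by (simp add: upper_left_block_def lower_right_block_def del: One_nat_def)
next
  case (Suc r)
  have Ar: "A ^\<^sub>m r \<in> carrier_mat n n" using A by simp
  show ?case
    using Suc block_upper_triangular_mult[OF Ar A kn _ tA] upper_left_block_mult[OF Ar A kn _ tA]
      lower_right_block_mult[OF Ar A kn _ tA]
    by simp
qed

lemma mat_trace_blocks:
  assumes A: "A \<in> carrier_mat n n" and kn: "k \<le> n"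
  shows "mat_trace A = mat_trace (upper_left_block k A) + mat_trace (lower_right_block n k A)"
proof -
  have "mat_trace A = (\<Sum>i<k. A $$ (i,i)) + (\<Sum>i\<in>{k..<n}. A $$ (i,i))"
    unfolding mat_trace_def using A kn sum.atLeastLessThan_concat[of 0 k n "\<lambda>i. A $$ (i,i)"]
    by (simp add: lessThan_atLeast0)
  also have "(\<Sum>i\<in>{k..<n}. A $$ (i,i)) = (\<Sum>i<n-k. A $$ (i+k,i+k))"
    using kn by (rule sum_shift_lessThan)
  finally show ?thesis unfolding mat_trace_def upper_left_block_def lower_right_block_def by simp
qed

lemma pow_one_plus_square_zero:
  fixes E :: "'a::comm_ring_1 mat"
  assumes E: "E \<in> carrier_mat n n" and EE: "E * E = 0\<^sub>m n n"
  shows "(1\<^sub>m n + E) ^\<^sub>m r = 1\<^sub>m n + of_nat r \<cdot>\<^sub>m E"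
proof (induction r)
  case 0
  then show ?case using E by auto
next
  case (Suc r)
  have C: "1\<^sub>m n + of_nat r \<cdot>\<^sub>m E \<in> carrier_mat n n" using E by simp
  have "(1\<^sub>m n + E) ^\<^sub>m Suc r = (1\<^sub>m n + of_nat r \<cdot>\<^sub>m E) * (1\<^sub>m n + E)" using Suc by simp
  also have "\<dots> = (1\<^sub>m n + of_nat r \<cdot>\<^sub>m E) * 1\<^sub>m n + (1\<^sub>m n + of_nat r \<cdot>\<^sub>m E) * E"
    by (rule mult_add_distrib_mat[OF C one_carrier_mat E])
  also have "\<dots> = (1\<^sub>m n + of_nat r \<cdot>\<^sub>m E) + (E + of_nat r \<cdot>\<^sub>m (E * E))"
    using C E add_mult_distrib_mat[OF one_carrier_mat smult_carrier_mat[OF E] E]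
      mult_smult_assoc_mat[OF E E] by simp
  also have "\<dots> = 1\<^sub>m n + of_nat (Suc r) \<cdot>\<^sub>m E"
    using E unfolding EE by (auto simp: algebra_simps)
  finally show ?case .
qed

text \<open>The only nonzero block of \<open>A - 1\<close> is the upper right one, so its square vanishes and
  \<open>A\<^sup>m = 1 + m (A - 1)\<close>.\<close>

lemma block_unitriangular_finite_order_eq_one:
  fixes A :: "'a::field_char_0 mat"
  assumes A: "A \<in> carrier_mat n n" and kn: "k \<le> n" and tA: "block_upper_triangular n k A"
    and u: "upper_left_block k A = 1\<^sub>m k" and l: "lower_right_block n k A = 1\<^sub>m (n-k)"
    and p: "A ^\<^sub>m m = 1\<^sub>m n" and m: "m > 0"
  shows "A = 1\<^sub>m n"
proof -
  define E where "E = A - 1\<^sub>m n"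
  have E: "E \<in> carrier_mat n n" unfolding E_def using A by (simp add: minus_carrier_mat)
  have AE: "A = 1\<^sub>m n + E" unfolding E_def using A by auto
  have E_zero: "E $$ (i,j) = 0" if "i < n" "j < n" "\<not> (i < k \<and> k \<le> j)" for i j
  proof (cases "i < k")
    case True
    hence "j < k" using that by auto
    thus ?thesis
      using arg_cong[OF u, of "\<lambda>M. M $$ (i,j)"] True that A
      unfolding E_def upper_left_block_def by simp
  next
    case False
    show ?thesis
    proof (cases "j < k")
      case True
      thus ?thesis using tA False that A unfolding block_upper_triangular_def E_def by auto
    next
      case F2: False
      have "(i - k = j - k) = (i = j)" using False F2 by auto
      thus ?thesis
        using arg_cong[OF l, of "\<lambda>M. M $$ (i-k,j-k)"] False F2 that A
        unfolding E_def lower_right_block_def by simp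
    qed
  qed
  have "E * E = 0\<^sub>m n n"
  proof (rule eq_matI)
    fix i j assume "i < dim_row (0\<^sub>m n n :: 'a mat)" "j < dim_col (0\<^sub>m n n :: 'a mat)"
    hence ij: "i < n" "j < n" by auto
    have "(\<Sum>l<n. E $$ (i,l) * E $$ (l,j)) = 0"
    proof (rule sum.neutral, intro ballI)
      fix l assume "l \<in> {..<n}"
      thus "E $$ (i,l) * E $$ (l,j) = 0"
        using E_zero[of l j] E_zero[of i l] ij by (cases "i < k \<and> k \<le> l") auto
    qed
    thus "(E * E) $$ (i,j) = (0\<^sub>m n n :: 'a mat) $$ (i,j)"
      using index_mult_mat_sum[OF E E ij] ij by simp
  qed (use E in auto)
  hence mE: "1\<^sub>m n + of_nat m \<cdot>\<^sub>m E = 1\<^sub>m n"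
    using pow_one_plus_square_zero[OF E, of m] p unfolding AE by simp
  have "E = 0\<^sub>m n n"
  proof (rule eq_matI)
    fix i j assume "i < dim_row (0\<^sub>m n n :: 'a mat)" "j < dim_col (0\<^sub>m n n :: 'a mat)"
    hence ij: "i < n" "j < n" by auto
    hence "of_nat m * E $$ (i,j) = 0" using arg_cong[OF mE, of "\<lambda>M. M $$ (i,j)"] E by simp
    thus "E $$ (i,j) = (0\<^sub>m n n :: 'a mat) $$ (i,j)" using m ij by simp
  qed (use E in auto)
  thus ?thesis using AE A by simp
qed

section \<open>Invariant subspaces and block triangular form\<close>

definition vec_subspace :: "nat \<Rightarrow> 'a::field vec set \<Rightarrow> bool" where
  "vec_subspace n S \<longleftrightarrow> S \<subseteq> carrier_vec n \<and> 0\<^sub>v n \<in> S \<and>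
     (\<forall>v\<in>S. \<forall>w\<in>S. v + w \<in> S) \<and> (\<forall>c. \<forall>v\<in>S. c \<cdot>\<^sub>v v \<in> S)"

context vec_space
begin

lemma maximal_indpt_spans:
  fixes S :: "'a vec set"
  assumes AC: "A \<subseteq> carrier_vec n" and Ali: "lin_indpt A" and SC: "S \<subseteq> carrier_vec n"
    and max: "\<And>w. w \<in> S \<Longrightarrow> w \<notin> A \<Longrightarrow> lin_dep (A \<union> {w})"
  shows "S \<subseteq> span A"
proof
  fix w assume w: "w \<in> S"
  show "w \<in> span A"
  proof (rule ccontr)
    assume nw: "w \<notin> span A"
    hence "w \<notin> A" using in_own_span[OF AC] by auto
    thus False using lin_dep_iff_in_span[OF AC Ali] max[OF w] nw w SC by auto
  qed
qed

lemma subspace_basis_extension: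
  fixes S :: "'a vec set"
  assumes "vec_subspace n S"
  shows "\<exists>A B. A \<subseteq> B \<and> finite B \<and> card B = n \<and> span A = S \<and> span B = carrier_vec n
      \<and> B \<subseteq> carrier_vec n"
proof -
  have SC: "S \<subseteq> carrier_vec n" using assms unfolding vec_subspace_def by simp
  have sub: "submodule class_ring S V"
    using assms unfolding submodule_def vec_subspace_def by (auto intro: module_axioms)
  have bnd: "\<And>A. A \<subseteq> carrier_vec n \<and> lin_indpt A \<Longrightarrow> finite A \<and> card A \<le> n"
    using li_le_dim[OF fin_dim] dim_is_n by auto
  have li0: "lin_indpt {}" unfolding lin_dep_def by auto
  obtain A where A: "finite A" "maximal A (\<lambda>A. A \<subseteq> S \<and> lin_indpt A)"
    using maximal_exists[of "\<lambda>A. A \<subseteq> S \<and> lin_indpt A" n "{}"] bnd SC li0 by blast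
  have AS: "A \<subseteq> S" and Ali: "lin_indpt A" using A unfolding maximal_def by auto
  have AC: "A \<subseteq> carrier_vec n" using AS SC by auto
  have "lin_dep (A \<union> {w})" if "w \<in> S" "w \<notin> A" for w
    using A(2) AS that unfolding maximal_def by blast
  hence spA: "span A = S" using maximal_indpt_spans[OF AC Ali SC] span_is_subset[OF AS sub] by blast
  obtain B where B: "finite B" "maximal B (\<lambda>B. A \<subseteq> B \<and> B \<subseteq> carrier_vec n \<and> lin_indpt B)"
    using maximal_exists[of "\<lambda>B. A \<subseteq> B \<and> B \<subseteq> carrier_vec n \<and> lin_indpt B" n A] bnd AC Ali
    by blast
  have AB: "A \<subseteq> B" and BC: "B \<subseteq> carrier_vec n" and Bli: "lin_indpt B"
    using B unfolding maximal_def by auto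
  have "lin_dep (B \<union> {w})" if "w \<in> carrier_vec n" "w \<notin> B" for w
    using B(2) AB BC that unfolding maximal_def by blast
  hence spB: "span B = carrier_vec n"
    using maximal_indpt_spans[OF BC Bli subset_refl] span_is_subset2[OF BC] by blast
  have "card B = n" using dim_basis[OF B(1)] dim_is_n BC Bli spB unfolding basis_def by simp
  thus ?thesis using AB B(1) spA spB BC by blast
qed

lemma mat_of_cols_right_inverse:
  assumes bsC: "set bs \<subseteq> carrier_vec n" and spB: "span (set bs) = carrier_vec n"
    and lbs: "length bs = n"
  shows "\<exists>P'. P' \<in> carrier_mat n n \<and> mat_of_cols n bs * P' = 1\<^sub>m n \<and> P' * mat_of_cols n bs = 1\<^sub>m n"
proof -
  define P where "P = mat_of_cols n bs"
  have P: "P \<in> carrier_mat n n" unfolding P_def using mat_of_cols_carrier(1)[of n bs] lbs by simp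
  have repr: "\<exists>c. v = P *\<^sub>v vec n c" if v: "v \<in> carrier_vec n" for v
  proof -
    have "v \<in> span_list bs" using span_list_as_span[OF bsC] spB v by simp
    then obtain c where "v = lincomb_list c bs" by (rule in_span_listE)
    also have "\<dots> = mat_of_cols n bs *\<^sub>v vec (length bs) c"
      by (rule lincomb_list_as_mat_mult) (use bsC in auto)
    also have "\<dots> = P *\<^sub>v vec n c" unfolding P_def lbs ..
    finally show ?thesis by blast
  qed
  have "\<forall>j. \<exists>c. unit_vec n j = P *\<^sub>v vec n c" using repr unit_vec_carrier by blast
  then obtain cf where cf: "\<forall>j. unit_vec n j = P *\<^sub>v vec n (cf j)" by metis
  define P' where "P' = mat n n (\<lambda>(i,j). cf j i)"
  have P': "P' \<in> carrier_mat n n" unfolding P'_def by simp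
  have PP': "P * P' = 1\<^sub>m n"
  proof (rule mat_col_eqI)
    fix j assume j: "j < dim_col (1\<^sub>m n :: 'a mat)"
    hence "col P' j = vec n (cf j)" unfolding P'_def by (auto simp: col_def)
    hence "col (P * P') j = unit_vec n j" using col_mult2[OF P P'] j cf by simp
    thus "col (P * P') j = col (1\<^sub>m n) j" using j by simp
  qed (use P P' in auto)
  thus ?thesis using P' mat_mult_left_right_inverse[OF P P' PP'] unfolding P_def by blast
qed

lemma span_prefix_of_cols:
  assumes C: "set (as @ cs) \<subseteq> carrier_vec n" and len: "length (as @ cs) = n"
    and v: "v \<in> span (set as)"
  shows "\<exists>d \<in> carrier_vec n. v = mat_of_cols n (as @ cs) *\<^sub>v d \<and>
    (\<forall>i. length as \<le> i \<and> i < n \<longrightarrow> d $ i = 0)"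
proof -
  define k where "k = length as"
  have asC: "set as \<subseteq> carrier_vec n" using C by simp
  have "v \<in> span_list as" using span_list_as_span[OF asC] v by simp
  then obtain c where vc: "v = lincomb_list c as" by (rule in_span_listE)
  define d where "d = vec n (\<lambda>j. if j < k then c j else 0)"
  have "v = mat_of_cols n as *\<^sub>v vec k c"
    unfolding vc k_def by (rule lincomb_list_as_mat_mult) (use asC in auto)
  also have "\<dots> = mat_of_cols n (as @ cs) *\<^sub>v d"
  proof (rule eq_vecI)
    fix r assume "r < dim_vec (mat_of_cols n (as @ cs) *\<^sub>v d)"
    hence r: "r < n" by simp
    have "(mat_of_cols n (as @ cs) *\<^sub>v d) $ r = (\<Sum>j<n. (as @ cs) ! j $ r * d $ j)"
      using r len unfolding d_def
      by (auto simp: mult_mat_vec_def scalar_prod_def lessThan_atLeast0 mat_of_cols_def intro!: sum.cong)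
    also have "\<dots> = (\<Sum>j<k. (as @ cs) ! j $ r * d $ j)"
      by (rule sum.mono_neutral_right) (use len in \<open>auto simp: d_def k_def\<close>)
    also have "\<dots> = (\<Sum>j<k. as ! j $ r * c j)"
      by (rule sum.cong) (use len in \<open>auto simp: d_def k_def nth_append\<close>)
    also have "\<dots> = (mat_of_cols n as *\<^sub>v vec k c) $ r"
      using r unfolding k_def
      by (auto simp: mult_mat_vec_def scalar_prod_def lessThan_atLeast0 mat_of_cols_def intro!: sum.cong)
    finally show "(mat_of_cols n as *\<^sub>v vec k c) $ r = (mat_of_cols n (as @ cs) *\<^sub>v d) $ r" by simp
  qed (auto simp: d_def k_def)
  finally show ?thesis unfolding d_def k_def by auto
qed

lemma subspace_adapted_basis:
  fixes S :: "'a vec set"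
  assumes S: "vec_subspace n S" and Sn0: "S \<noteq> {0\<^sub>v n}" and Snf: "S \<noteq> carrier_vec n"
  shows "\<exists>k P P'. 0 < k \<and> k < n \<and> P \<in> carrier_mat n n \<and> P' \<in> carrier_mat n n \<and>
     P * P' = 1\<^sub>m n \<and> P' * P = 1\<^sub>m n \<and> (\<forall>j<k. col P j \<in> S) \<and>
     (\<forall>v\<in>S. \<forall>i. k \<le> i \<and> i < n \<longrightarrow> (P' *\<^sub>v v) $ i = 0)"
proof -
  obtain A B where AB: "A \<subseteq> B" and fB: "finite B" and cB: "card B = n" and spA: "span A = S"
    and spB: "span B = carrier_vec n" and BC: "B \<subseteq> carrier_vec n"
    using subspace_basis_extension[OF S] by blast
  have fA: "finite A" using AB fB finite_subset by auto
  obtain as where as: "set as = A" "distinct as" using finite_distinct_list[OF fA] by blast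
  obtain cs where cs: "set cs = B - A" "distinct cs" using finite_distinct_list[of "B - A"] fB by blast
  define bs where "bs = as @ cs"
  define k where "k = length as"
  have bsB: "set bs = B" using as cs AB unfolding bs_def by auto
  have lbs: "length bs = n"
    using distinct_card[of bs] bsB cB as cs unfolding bs_def by auto
  have kA: "k = card A" using distinct_card[OF as(2)] as(1) k_def by simp
  have k0: "0 < k"
  proof (rule ccontr)
    assume "\<not> 0 < k"
    hence "A = {}" using kA fA by auto
    thus False using spA span_empty Sn0 by simp
  qed
  have kn: "k < n"
  proof (rule ccontr)
    assume "\<not> k < n"
    hence "card A = card B" using kA cB card_mono[OF fB AB] by simp
    hence "A = B" using card_subset_eq[OF fB AB] by simp
    thus False using spA spB Snf by simp
  qed
  define P where "P = mat_of_cols n bs"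
  have P: "P \<in> carrier_mat n n" unfolding P_def using mat_of_cols_carrier(1)[of n bs] lbs by simp
  have bsC: "set bs \<subseteq> carrier_vec n" using bsB BC by simp
  obtain P' where P': "P' \<in> carrier_mat n n" and PP': "P * P' = 1\<^sub>m n" and P'P: "P' * P = 1\<^sub>m n"
    using mat_of_cols_right_inverse[OF bsC] bsB spB lbs unfolding P_def by blast
  have "col P j \<in> S" if j: "j < k" for j
  proof -
    have "col P j = bs ! j" unfolding P_def using j kn lbs bsC by (intro col_mat_of_cols) auto
    also have "\<dots> = as ! j" unfolding bs_def using j k_def by (simp add: nth_append)
    finally have "col P j = as ! j" .
    moreover have "as ! j \<in> A" using as j k_def by auto
    moreover have "A \<subseteq> carrier_vec n" using AB BC by auto
    ultimately show ?thesis using in_own_span[of A] spA by auto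
  qed
  moreover have "(P' *\<^sub>v v) $ i = 0" if v: "v \<in> S" and i: "k \<le> i" "i < n" for v i
  proof -
    obtain d where d: "d \<in> carrier_vec n" "v = P *\<^sub>v d" and dz: "\<forall>i. k \<le> i \<and> i < n \<longrightarrow> d $ i = 0"
      using span_prefix_of_cols[of as cs v] bsC lbs v spA as unfolding P_def bs_def k_def by auto
    have "P' *\<^sub>v v = (P' * P) *\<^sub>v d" using assoc_mult_mat_vec[OF P' P d(1)] d(2) by simp
    thus ?thesis using P'P d(1) dz i by simp
  qed
  ultimately show ?thesis using k0 kn P P' PP' P'P by blast
qed

end

lemma invariant_subspace_block_triangular:
  fixes S :: "'a::field vec set"
  assumes S: "vec_subspace n S" "S \<noteq> {0\<^sub>v n}" "S \<noteq> carrier_vec n"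
    and Ms: "Ms \<subseteq> carrier_mat n n" and inv: "\<forall>M\<in>Ms. \<forall>v\<in>S. M *\<^sub>v v \<in> S"
  shows "\<exists>k P P'. 0 < k \<and> k < n \<and> P \<in> carrier_mat n n \<and> P' \<in> carrier_mat n n \<and>
     P * P' = 1\<^sub>m n \<and> P' * P = 1\<^sub>m n \<and> (\<forall>M\<in>Ms. block_upper_triangular n k (P' * M * P))"
proof -
  obtain k P P' where kn: "0 < k" "k < n" and P: "P \<in> carrier_mat n n" and P': "P' \<in> carrier_mat n n"
    and inverse: "P * P' = 1\<^sub>m n" "P' * P = 1\<^sub>m n" and colS: "\<forall>j<k. col P j \<in> S"
    and zero: "\<forall>v\<in>S. \<forall>i. k \<le> i \<and> i < n \<longrightarrow> (P' *\<^sub>v v) $ i = 0"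
    using vec_space.subspace_adapted_basis[OF S] by blast
  have "block_upper_triangular n k (P' * M * P)" if M: "M \<in> Ms" for M
    unfolding block_upper_triangular_def
  proof (intro allI impI)
    fix i j assume ij: "k \<le> i \<and> i < n \<and> j < k"
    have MC: "M \<in> carrier_mat n n" using M Ms by auto
    have cj: "col P j \<in> carrier_vec n" using P unfolding carrier_vec_def by simp
    have "(P' * M * P) $$ (i,j) = row (P' * M) i \<bullet> col P j"
      by (rule index_mult_mat(1)) (use ij kn P P' MC in auto)
    also have "\<dots> = ((P' * M) *\<^sub>v col P j) $ i"
      by (rule index_mult_mat_vec[symmetric]) (use ij kn P P' MC in auto)
    also have "\<dots> = (P' *\<^sub>v (M *\<^sub>v col P j)) $ i"
      using assoc_mult_mat_vec[OF P' MC cj] by simp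
    also have "\<dots> = 0" using zero inv M colS ij by auto
    finally show "(P' * M * P) $$ (i,j) = 0" .
  qed
  thus ?thesis using kn P P' inverse by blast
qed

section \<open>Matrices of finite order\<close>

lemma cmod_add_eq_bound_sum:
  fixes x y :: complex and a b :: real
  assumes xa: "cmod x \<le> a" and yb: "cmod y \<le> b" and s: "cmod (x + y) = a + b"
    and a: "a > 0" and b: "b > 0"
  shows "cmod x = a \<and> cmod y = b \<and> x / of_real a = y / of_real b"
proof -
  have "cmod (x + y) \<le> cmod x + cmod y" by (rule norm_triangle_ineq)
  hence xa': "cmod x = a" and yb': "cmod y = b" using xa yb s by auto
  have "cmod (x + y) ^ 2 = cmod x ^ 2 + cmod y ^ 2 + 2 * Re (x * cnj y)"
    by (simp add: cmod_power2 power2_sum algebra_simps)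
  hence R: "Re (x * cnj y) = a * b" using xa' yb' s by (simp add: power2_sum algebra_simps)
  have "cmod (x * cnj y) = a * b" using xa' yb' by (simp add: norm_mult)
  hence z: "x * cnj y = complex_of_real (a * b)" using R
    by (metis Im_eq_0 abs_norm_cancel complex_is_Real_iff of_real_Re)
  have "x * (cnj y * y) = complex_of_real (a * b) * y" using z by (simp add: algebra_simps)
  moreover have "cnj y * y = complex_of_real (b ^ 2)"
    using yb' complex_norm_square[of y] by (simp add: mult.commute)
  ultimately have "x * complex_of_real (b ^ 2) = complex_of_real (a * b) * y" by simp
  hence "x * complex_of_real b = complex_of_real a * y" using b
    by (simp add: power2_eq_square algebra_simps)
  hence "x / of_real a = y / of_real b" using a b by (simp add: field_simps)
  thus ?thesis using xa' yb' by simp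
qed

lemma vec_subspace_line:
  fixes v :: "'a::field vec"
  assumes v: "v \<in> carrier_vec n" and v0: "v \<noteq> 0\<^sub>v n" and n2: "2 \<le> n"
  shows "vec_subspace n (range (\<lambda>c. c \<cdot>\<^sub>v v))" "range (\<lambda>c. c \<cdot>\<^sub>v v) \<noteq> {0\<^sub>v n}"
    "range (\<lambda>c. c \<cdot>\<^sub>v v) \<noteq> carrier_vec n"
proof -
  have "0\<^sub>v n = 0 \<cdot>\<^sub>v v" using v by auto
  thus "vec_subspace n (range (\<lambda>c. c \<cdot>\<^sub>v v))"
    unfolding vec_subspace_def using v
    by (auto simp: add_smult_distrib_vec[symmetric] smult_smult_assoc)
  have "v \<in> range (\<lambda>c. c \<cdot>\<^sub>v v)" by (auto intro!: image_eqI[of _ _ 1])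
  thus "range (\<lambda>c. c \<cdot>\<^sub>v v) \<noteq> {0\<^sub>v n}" using v0 by auto
  show "range (\<lambda>c. c \<cdot>\<^sub>v v) \<noteq> carrier_vec n"
  proof
    assume "range (\<lambda>c. c \<cdot>\<^sub>v v) = carrier_vec n"
    then obtain a b where a: "unit_vec n 0 = a \<cdot>\<^sub>v v" and b: "unit_vec n 1 = b \<cdot>\<^sub>v v"
      by (metis imageE unit_vec_carrier)
    have "1 = a * v $ 0" using arg_cong[OF a, of "\<lambda>w. w $ 0"] n2 v by simp
    moreover have "0 = b * v $ 0" and "1 = b * v $ 1"
      using arg_cong[OF b, of "\<lambda>w. w $ 0"] arg_cong[OF b, of "\<lambda>w. w $ 1"] n2 v by auto
    ultimately show False by auto
  qed
qed

lemma exists_block_triangular_similar: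
  fixes A :: "complex mat"
  assumes A: "A \<in> carrier_mat n n" and n2: "2 \<le> n"
  shows "\<exists>k P P'. 0 < k \<and> k < n \<and> P \<in> carrier_mat n n \<and> P' \<in> carrier_mat n n \<and>
     P * P' = 1\<^sub>m n \<and> P' * P = 1\<^sub>m n \<and> block_upper_triangular n k (P' * A * P)"
proof -
  obtain \<mu> where "\<mu> \<in> spectrum A" using spectrum_non_empty[OF A] n2 by auto
  then obtain v where v: "v \<in> carrier_vec n" "v \<noteq> 0\<^sub>v n" "A *\<^sub>v v = \<mu> \<cdot>\<^sub>v v"
    unfolding spectrum_def eigenvalue_def eigenvector_def using A by auto
  have "A *\<^sub>v (c \<cdot>\<^sub>v v) = (c * \<mu>) \<cdot>\<^sub>v v" for c
    using mult_mat_vec[OF A v(1)] v(3) by (simp add: smult_smult_assoc)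
  hence "\<forall>w\<in>range (\<lambda>c. c \<cdot>\<^sub>v v). A *\<^sub>v w \<in> range (\<lambda>c. c \<cdot>\<^sub>v v)" by auto
  thus ?thesis using invariant_subspace_block_triangular[OF vec_subspace_line[OF v(1,2) n2], of "{A}"] A
    by auto
qed

lemma block_scalar_finite_order_eq_scalar:
  fixes Q :: "'a::field_char_0 mat"
  assumes Q: "Q \<in> carrier_mat n n" and kn: "k \<le> n" and tQ: "block_upper_triangular n k Q"
    and u: "upper_left_block k Q = a \<cdot>\<^sub>m 1\<^sub>m k" and l: "lower_right_block n k Q = a \<cdot>\<^sub>m 1\<^sub>m (n-k)"
    and Qm: "Q ^\<^sub>m m = 1\<^sub>m n" and m: "0 < m" and am: "a ^ m = 1"
  shows "Q = a \<cdot>\<^sub>m 1\<^sub>m n"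
proof -
  have a0: "a \<noteq> 0" using am m by (metis power_0_left zero_neq_one gr_implies_not0)
  define Q' where "Q' = inverse a \<cdot>\<^sub>m Q"
  have Q': "Q' \<in> carrier_mat n n" unfolding Q'_def using Q by simp
  have tQ': "block_upper_triangular n k Q'"
    using tQ Q unfolding Q'_def block_upper_triangular_def by auto
  have uQ': "upper_left_block k Q' = 1\<^sub>m k"
  proof (rule eq_matI)
    fix i j assume "i < dim_row (1\<^sub>m k :: 'a mat)" "j < dim_col (1\<^sub>m k :: 'a mat)"
    hence ij: "i < k" "j < k" by auto
    have "Q $$ (i,j) = (a \<cdot>\<^sub>m 1\<^sub>m k) $$ (i,j)"
      using arg_cong[OF u, of "\<lambda>M. M $$ (i,j)"] ij by (simp add: upper_left_block_def)
    thus "upper_left_block k Q' $$ (i,j) = (1\<^sub>m k :: 'a mat) $$ (i,j)"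
      unfolding Q'_def upper_left_block_def using ij kn Q a0 by auto
  qed (auto simp: upper_left_block_def)
  have lQ': "lower_right_block n k Q' = 1\<^sub>m (n-k)"
  proof (rule eq_matI)
    fix i j assume "i < dim_row (1\<^sub>m (n-k) :: 'a mat)" "j < dim_col (1\<^sub>m (n-k) :: 'a mat)"
    hence ij: "i < n-k" "j < n-k" by auto
    have "Q $$ (i+k,j+k) = (a \<cdot>\<^sub>m 1\<^sub>m (n-k)) $$ (i,j)"
      using arg_cong[OF l, of "\<lambda>M. M $$ (i,j)"] ij by (simp add: lower_right_block_def)
    thus "lower_right_block n k Q' $$ (i,j) = (1\<^sub>m (n-k) :: 'a mat) $$ (i,j)"
      unfolding Q'_def lower_right_block_def using ij kn Q a0 by auto
  qed (auto simp: lower_right_block_def)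
  have "Q' ^\<^sub>m m = inverse a ^ m \<cdot>\<^sub>m 1\<^sub>m n" unfolding Q'_def using smult_pow_mat[OF Q] Qm by simp
  hence "Q' ^\<^sub>m m = 1\<^sub>m n" using am by (auto simp: power_inverse)
  hence "Q' = 1\<^sub>m n" using block_unitriangular_finite_order_eq_one[OF Q' kn tQ' uQ' lQ'] m by simp
  moreover have "Q = a \<cdot>\<^sub>m Q'" unfolding Q'_def using a0 Q by auto
  ultimately show ?thesis by simp
qed

text \<open>Induction on the dimension: after triangularising along an eigenline, both diagonal blocks
  again have finite order, and equality in the triangle inequality forces them to be the same
  scalar.\<close>

lemma finite_order_mat_trace_norm:
  fixes A :: "complex mat"
  assumes "A \<in> carrier_mat n n" "A ^\<^sub>m m = 1\<^sub>m n" "0 < m"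
  shows "cmod (mat_trace A) \<le> n \<and> (cmod (mat_trace A) = n \<longrightarrow> (\<exists>c. A = c \<cdot>\<^sub>m 1\<^sub>m n))"
  using assms
proof (induction n arbitrary: A rule: less_induct)
  case (less n A)
  note A = less.prems(1) and Am = less.prems(2) and m = less.prems(3)
  show ?case
  proof (cases "n < 2")
    case True
    define c where "c = A $$ (0,0)"
    have "i = 0" if "i < n" for i using True that by linarith
    hence Ac: "A = c \<cdot>\<^sub>m 1\<^sub>m n" using A unfolding c_def by (intro eq_matI) auto
    have tr: "cmod (mat_trace A) = n * cmod c" by (simp add: Ac mat_trace_smult_one norm_mult)
    have "cmod c = 1" if "n = 1"
      using scalar_mat_pow_eq_one[of c n m] Am Ac that norm_eq_1_if_power_eq_1 m by auto
    hence "cmod (mat_trace A) = n" using tr True by (cases "n = 0") auto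
    thus ?thesis using Ac by auto
  next
    case False
    then obtain k P P' where kn: "0 < k" "k < n" and P: "P \<in> carrier_mat n n"
      and P': "P' \<in> carrier_mat n n" and PP': "P * P' = 1\<^sub>m n" and P'P: "P' * P = 1\<^sub>m n"
      and tQ: "block_upper_triangular n k (P' * A * P)"
      using exists_block_triangular_similar[OF A] by (meson not_less)
    define Q where "Q = P' * A * P"
    define U where "U = upper_left_block k Q"
    define L where "L = lower_right_block n k Q"
    have Q: "Q \<in> carrier_mat n n" unfolding Q_def using P P' A by simp
    have "similar_mat_wit Q A P' P"
      unfolding similar_mat_wit_def Let_def Q_def using P P' A PP' P'P by auto
    hence Qm: "Q ^\<^sub>m m = 1\<^sub>m n" using similar_mat_wit_pow_id[of Q A P' P m] Am P P' P'P by simp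
    have "U ^\<^sub>m m = upper_left_block k (Q ^\<^sub>m m)" "L ^\<^sub>m m = lower_right_block n k (Q ^\<^sub>m m)"
      using block_upper_triangular_pow[OF Q _ tQ[folded Q_def], of m] kn unfolding U_def L_def by auto
    hence Um: "U ^\<^sub>m m = 1\<^sub>m k" and Lm: "L ^\<^sub>m m = 1\<^sub>m (n-k)"
      using Qm upper_left_block_one[of k n] lower_right_block_one[of n k] kn by auto
    have IHU: "cmod (mat_trace U) \<le> k \<and> (cmod (mat_trace U) = k \<longrightarrow> (\<exists>c. U = c \<cdot>\<^sub>m 1\<^sub>m k))"
      using less.IH[OF kn(2) _ Um m] unfolding U_def by simp
    have IHL: "cmod (mat_trace L) \<le> (n-k) \<and>
        (cmod (mat_trace L) = (n-k) \<longrightarrow> (\<exists>c. L = c \<cdot>\<^sub>m 1\<^sub>m (n-k)))"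
      using less.IH[OF _ _ Lm m] kn unfolding L_def by simp
    have tr: "mat_trace A = mat_trace U + mat_trace L"
      using mat_trace_conj[OF A P P' PP'] mat_trace_blocks[OF Q] kn unfolding U_def L_def Q_def
      by simp
    have "cmod (mat_trace A) \<le> cmod (mat_trace U) + cmod (mat_trace L)"
      unfolding tr by (rule norm_triangle_ineq)
    hence bound: "cmod (mat_trace A) \<le> n" using IHU IHL kn by simp
    have "\<exists>c. A = c \<cdot>\<^sub>m 1\<^sub>m n" if eq: "cmod (mat_trace A) = n"
    proof -
      have te: "cmod (mat_trace U) = k \<and> cmod (mat_trace L) = real (n-k) \<and>
          mat_trace U / of_real (real k) = mat_trace L / of_real (real (n - k))"
        by (rule cmod_add_eq_bound_sum) (use IHU IHL eq tr kn in auto)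
      obtain a where a: "U = a \<cdot>\<^sub>m 1\<^sub>m k" using IHU te by auto
      obtain b where b: "L = b \<cdot>\<^sub>m 1\<^sub>m (n-k)" using IHL te by auto
      have "a = b" using te kn unfolding a b mat_trace_smult_one by simp
      moreover have "a ^ m = 1" using scalar_mat_pow_eq_one[of a k m] Um a kn by simp
      ultimately have "Q = a \<cdot>\<^sub>m 1\<^sub>m n"
        using block_scalar_finite_order_eq_scalar[OF Q _ tQ[folded Q_def]] a b Qm m kn
        unfolding U_def L_def by simp
      hence "A = P * (a \<cdot>\<^sub>m 1\<^sub>m n) * P'" using conj_mat_cancel[OF A P P' PP'] unfolding Q_def by simp
      also have "\<dots> = (a \<cdot>\<^sub>m P) * P'" using mult_smult_distrib[OF P one_carrier_mat] P by simp
      also have "\<dots> = a \<cdot>\<^sub>m 1\<^sub>m n" using mult_smult_assoc_mat[OF P P'] PP' by simp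
      finally show ?thesis by blast
    qed
    thus ?thesis using bound by auto
  qed
qed

lemma finite_order_mat_trace_eq_dim:
  fixes A :: "complex mat"
  assumes A: "A \<in> carrier_mat n n" and "A ^\<^sub>m m = 1\<^sub>m n" "0 < m" and tr: "mat_trace A = of_nat n"
  shows "A = 1\<^sub>m n"
proof -
  obtain c where c: "A = c \<cdot>\<^sub>m 1\<^sub>m n"
    using finite_order_mat_trace_norm[OF assms(1-3)] tr by auto
  show ?thesis
  proof (cases "n = 0")
    case True thus ?thesis using A by auto
  next
    case False
    hence "c = 1" using tr unfolding c mat_trace_smult_one by simp
    thus ?thesis unfolding c by auto
  qed
qed

section \<open>Representations\<close>

lemma rep_carrier: "is_rep G n \<rho> \<Longrightarrow> g \<in> carrier G \<Longrightarrow> \<rho> g \<in> carrier_mat n n"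
  unfolding is_rep_def by auto

lemma rep_one: "is_rep G n \<rho> \<Longrightarrow> \<rho> \<one>\<^bsub>G\<^esub> = 1\<^sub>m n"
  unfolding is_rep_def by auto

lemma rep_mult:
  "is_rep G n \<rho> \<Longrightarrow> g \<in> carrier G \<Longrightarrow> h \<in> carrier G \<Longrightarrow> \<rho> (g \<otimes>\<^bsub>G\<^esub> h) = \<rho> g * \<rho> h"
  unfolding is_rep_def by auto

lemma rep_finite_order:
  assumes G: "group G" and fin: "finite (carrier G)" and r: "is_rep G n \<rho>" and g: "g \<in> carrier G"
  obtains m where "0 < m" "\<rho> g ^\<^sub>m m = 1\<^sub>m n"
proof
  have "\<rho> (g [^]\<^bsub>G\<^esub> k) = \<rho> g ^\<^sub>m k" for k :: nat
  proof (induction k)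
    case 0 thus ?case using rep_one[OF r] rep_carrier[OF r g] by simp
  next
    case (Suc k)
    have "g [^]\<^bsub>G\<^esub> k \<in> carrier G" using G g by (simp add: group.is_monoid monoid.nat_pow_closed)
    thus ?case using Suc rep_mult[OF r _ g] by simp
  qed
  thus "\<rho> g ^\<^sub>m Coset.order G = 1\<^sub>m n"
    using group.pow_order_eq_1[OF G g] rep_one[OF r] by metis
  show "0 < Coset.order G" using fin G by (simp add: group.is_monoid monoid.order_gt_0_iff_finite)
qed

definition rep_kernel :: "('a, 'b) monoid_scheme \<Rightarrow> nat \<Rightarrow> ('a \<Rightarrow> complex mat) \<Rightarrow> 'a set" where
  "rep_kernel G n \<rho> = {g \<in> carrier G. \<rho> g = 1\<^sub>m n}"

lemma rep_kernel_normal: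
  fixes G (structure)
  assumes G: "group G" and r: "is_rep G n \<rho>"
  shows "rep_kernel G n \<rho> \<lhd> G"
proof -
  interpret group G by (rule G)
  have inv: "\<rho> (inv x) * \<rho> x = 1\<^sub>m n" "\<rho> x * \<rho> (inv x) = 1\<^sub>m n" if x: "x \<in> carrier G" for x
    using rep_mult[OF r, of "inv x" x] rep_mult[OF r, of x "inv x"] x rep_one[OF r] by auto
  have sub: "subgroup (rep_kernel G n \<rho>) G"
  proof (rule subgroupI)
    show "rep_kernel G n \<rho> \<subseteq> carrier G" unfolding rep_kernel_def by auto
    show "rep_kernel G n \<rho> \<noteq> {}" using rep_one[OF r] unfolding rep_kernel_def by auto
    fix a assume a: "a \<in> rep_kernel G n \<rho>"
    thus "inv a \<in> rep_kernel G n \<rho>"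
      using inv(1)[of a] rep_carrier[OF r, of "inv a"] unfolding rep_kernel_def by auto
    fix b assume b: "b \<in> rep_kernel G n \<rho>"
    show "a \<otimes> b \<in> rep_kernel G n \<rho>" using a b rep_mult[OF r] unfolding rep_kernel_def by auto
  qed
  show ?thesis unfolding normal_inv_iff
  proof (intro conjI sub ballI)
    fix x h assume x: "x \<in> carrier G" and h: "h \<in> rep_kernel G n \<rho>"
    have hc: "h \<in> carrier G" and h1: "\<rho> h = 1\<^sub>m n" using h unfolding rep_kernel_def by auto
    have "\<rho> (x \<otimes> h \<otimes> inv x) = \<rho> x * \<rho> h * \<rho> (inv x)" using rep_mult[OF r] x hc by simp
    also have "\<dots> = 1\<^sub>m n" using h1 rep_carrier[OF r x] inv(2)[OF x] by simp
    finally show "x \<otimes> h \<otimes> inv x \<in> rep_kernel G n \<rho>" unfolding rep_kernel_def using x hc by simp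
  qed
qed

lemma rep_conj:
  fixes G (structure)
  assumes r: "is_rep G d \<sigma>" and P: "P \<in> carrier_mat d d" and P': "P' \<in> carrier_mat d d"
    and PP': "P * P' = 1\<^sub>m d" and P'P: "P' * P = 1\<^sub>m d"
  shows "is_rep G d (\<lambda>x. P' * \<sigma> x * P)"
  unfolding is_rep_def
  using rep_carrier[OF r] rep_one[OF r] rep_mult[OF r] P P' P'P
    conj_mat_mult[OF rep_carrier[OF r] P P' PP' rep_carrier[OF r]]
  by auto

lemma rep_blocks:
  fixes G (structure)
  assumes r: "is_rep G d Q" and kd: "k \<le> d"
    and tri: "\<And>x. x \<in> carrier G \<Longrightarrow> block_upper_triangular d k (Q x)"
  shows "is_rep G k (\<lambda>x. upper_left_block k (Q x))"
    and "is_rep G (d - k) (\<lambda>x. lower_right_block d k (Q x))"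
  unfolding is_rep_def
  using rep_one[OF r] rep_mult[OF r] upper_left_block_one[OF kd] lower_right_block_one[of d k]
    upper_left_block_mult[OF rep_carrier[OF r] rep_carrier[OF r] kd tri tri]
    lower_right_block_mult[OF rep_carrier[OF r] rep_carrier[OF r] kd tri tri]
  by auto

lemma rep_split_of_invariant_subspace:
  fixes G (structure)
  assumes G: "group G" and fin: "finite (carrier G)" and r: "is_rep G d \<sigma>"
    and W: "invariant_subspace G d \<sigma> W" "W \<noteq> {0\<^sub>v d}" "W \<noteq> carrier_vec d"
  shows "\<exists>k \<sigma>1 \<sigma>2. 0 < k \<and> k < d \<and> is_rep G k \<sigma>1 \<and> is_rep G (d - k) \<sigma>2 \<and>
    (\<forall>x\<in>carrier G. \<sigma> x = 1\<^sub>m d \<longleftrightarrow> \<sigma>1 x = 1\<^sub>m k \<and> \<sigma>2 x = 1\<^sub>m (d - k))"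
proof -
  have "vec_subspace d W" "\<forall>M\<in>\<sigma> ` carrier G. \<forall>v\<in>W. M *\<^sub>v v \<in> W"
    using W(1) unfolding invariant_subspace_def vec_subspace_def by auto
  moreover have "\<sigma> ` carrier G \<subseteq> carrier_mat d d" using rep_carrier[OF r] by auto
  ultimately obtain k P P' where k: "0 < k" "k < d" and P: "P \<in> carrier_mat d d"
    and P': "P' \<in> carrier_mat d d" and PP': "P * P' = 1\<^sub>m d" and P'P: "P' * P = 1\<^sub>m d"
    and tri: "\<forall>M\<in>\<sigma> ` carrier G. block_upper_triangular d k (P' * M * P)"
    using invariant_subspace_block_triangular[of d W "\<sigma> ` carrier G"] W(2,3) by metis
  define Q where "Q x = P' * \<sigma> x * P" for x
  have Qrep: "is_rep G d Q" unfolding Q_def by (rule rep_conj[OF r P P' PP' P'P])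
  have Qt: "block_upper_triangular d k (Q x)" if "x \<in> carrier G" for x
    unfolding Q_def using tri that by auto
  have kd: "k \<le> d" using k by simp
  define \<sigma>1 where "\<sigma>1 x = upper_left_block k (Q x)" for x
  define \<sigma>2 where "\<sigma>2 x = lower_right_block d k (Q x)" for x
  have "\<sigma> x = 1\<^sub>m d \<longleftrightarrow> \<sigma>1 x = 1\<^sub>m k \<and> \<sigma>2 x = 1\<^sub>m (d - k)" if x: "x \<in> carrier G" for x
  proof
    assume "\<sigma> x = 1\<^sub>m d"
    hence "Q x = 1\<^sub>m d" unfolding Q_def using P P' P'P by simp
    thus "\<sigma>1 x = 1\<^sub>m k \<and> \<sigma>2 x = 1\<^sub>m (d - k)"
      unfolding \<sigma>1_def \<sigma>2_def using upper_left_block_one[OF kd] lower_right_block_one[of d k] by simp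
  next
    assume "\<sigma>1 x = 1\<^sub>m k \<and> \<sigma>2 x = 1\<^sub>m (d - k)"
    moreover obtain m where "0 < m" "Q x ^\<^sub>m m = 1\<^sub>m d" using rep_finite_order[OF G fin Qrep x] .
    ultimately have "Q x = 1\<^sub>m d"
      using block_unitriangular_finite_order_eq_one[OF rep_carrier[OF Qrep x] kd Qt[OF x]]
      unfolding \<sigma>1_def \<sigma>2_def by simp
    thus "\<sigma> x = 1\<^sub>m d" using conj_mat_cancel[OF rep_carrier[OF r x] P P' PP'] P PP'
      unfolding Q_def by simp
  qed
  moreover have "is_rep G k \<sigma>1" "is_rep G (d - k) \<sigma>2"
    unfolding \<sigma>1_def \<sigma>2_def using rep_blocks[OF Qrep kd Qt] by auto
  ultimately show ?thesis using k by blast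
qed

lemma exists_irr_rep_separating:
  fixes G (structure)
  assumes G: "group G" and fin: "finite (carrier G)" and N: "N \<subseteq> carrier G" and g: "g \<in> carrier G"
    and "is_rep G r \<rho>" "0 < r" "\<forall>y\<in>N. \<rho> y = 1\<^sub>m r" "\<rho> g \<noteq> 1\<^sub>m r"
  shows "\<exists>d \<sigma>. irr_rep G d \<sigma> \<and> (\<forall>y\<in>N. \<sigma> y = 1\<^sub>m d) \<and> \<sigma> g \<noteq> 1\<^sub>m d"
  using assms(5-)
proof (induction r arbitrary: \<rho> rule: less_induct)
  case (less r \<rho>)
  show ?case
  proof (cases "irr_rep G r \<rho>")
    case True
    thus ?thesis using less.prems by blast
  next
    case False
    then obtain W where "invariant_subspace G r \<rho> W" "W \<noteq> {0\<^sub>v r}" "W \<noteq> carrier_vec r"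
      using less.prems unfolding irr_rep_def by blast
    then obtain k \<sigma>1 \<sigma>2 where k: "0 < k" "k < r" and reps: "is_rep G k \<sigma>1" "is_rep G (r - k) \<sigma>2"
      and split: "\<forall>x\<in>carrier G. \<rho> x = 1\<^sub>m r \<longleftrightarrow> \<sigma>1 x = 1\<^sub>m k \<and> \<sigma>2 x = 1\<^sub>m (r - k)"
      using rep_split_of_invariant_subspace[OF G fin less.prems(1)] by blast
    have "\<forall>y\<in>N. \<sigma>1 y = 1\<^sub>m k" "\<forall>y\<in>N. \<sigma>2 y = 1\<^sub>m (r - k)" using split less.prems(3) N by auto
    moreover have "\<sigma>1 g \<noteq> 1\<^sub>m k \<or> \<sigma>2 g \<noteq> 1\<^sub>m (r - k)" using split less.prems(4) g by auto
    ultimately show ?thesis using less.IH[of k \<sigma>1] less.IH[of "r - k" \<sigma>2] reps k by auto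
  qed
qed

definition perm_mat_rep :: "'c list \<Rightarrow> ('a \<Rightarrow> 'c \<Rightarrow> 'c) \<Rightarrow> 'a \<Rightarrow> complex mat" where
  "perm_mat_rep cs \<phi> x =
     mat (length cs) (length cs) (\<lambda>(i,j). if cs ! i = \<phi> x (cs ! j) then 1 else 0)"

lemma perm_mat_rep_is_rep:
  fixes G (structure)
  assumes cs: "distinct cs"
    and closed: "\<And>x C. x \<in> carrier G \<Longrightarrow> C \<in> set cs \<Longrightarrow> \<phi> x C \<in> set cs"
    and one: "\<And>C. C \<in> set cs \<Longrightarrow> \<phi> \<one> C = C"
    and mult: "\<And>x y C. x \<in> carrier G \<Longrightarrow> y \<in> carrier G \<Longrightarrow> C \<in> set cs \<Longrightarrow> \<phi> (x \<otimes> y) C = \<phi> x (\<phi> y C)"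
  shows "is_rep G (length cs) (perm_mat_rep cs \<phi>)"
proof -
  let ?r = "length cs" and ?\<rho> = "perm_mat_rep cs \<phi>"
  have inj: "(cs ! l = cs ! l') = (l = l')" if "l < ?r" "l' < ?r" for l l'
    using nth_eq_iff_index_eq[OF cs] that by simp
  have rc: "?\<rho> x \<in> carrier_mat ?r ?r" for x unfolding perm_mat_rep_def by simp
  have r1: "?\<rho> \<one> = 1\<^sub>m ?r" unfolding perm_mat_rep_def by (rule eq_matI) (auto simp: one inj)
  have rm: "?\<rho> (x \<otimes> y) = ?\<rho> x * ?\<rho> y" if x: "x \<in> carrier G" and y: "y \<in> carrier G" for x y
  proof (rule eq_matI)
    fix i j assume "i < dim_row (?\<rho> x * ?\<rho> y)" "j < dim_col (?\<rho> x * ?\<rho> y)"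
    hence ij: "i < ?r" "j < ?r" unfolding perm_mat_rep_def by auto
    obtain l0 where l0: "l0 < ?r" "cs ! l0 = \<phi> y (cs ! j)"
      using closed[OF y nth_mem[OF ij(2)]] by (metis in_set_conv_nth)
    have "(?\<rho> x * ?\<rho> y) $$ (i,j) = (\<Sum>l<?r. ?\<rho> x $$ (i,l) * ?\<rho> y $$ (l,j))"
      using index_mult_mat_sum[OF rc rc ij] .
    also have "\<dots> = (\<Sum>l<?r. if l = l0 then (if cs ! i = \<phi> x (cs ! l) then 1 else 0) else 0)"
    proof (rule sum.cong)
      fix l assume "l \<in> {..<?r}"
      hence l: "l < ?r" by simp
      have "(cs ! l = \<phi> y (cs ! j)) = (l = l0)" using inj[OF l l0(1)] l0(2) by simp
      thus "?\<rho> x $$ (i,l) * ?\<rho> y $$ (l,j)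
          = (if l = l0 then (if cs ! i = \<phi> x (cs ! l) then 1 else 0) else 0)"
        unfolding perm_mat_rep_def using ij l by auto
    qed simp
    also have "\<dots> = (if cs ! i = \<phi> x (\<phi> y (cs ! j)) then 1 else 0)" using l0 by simp
    finally show "?\<rho> (x \<otimes> y) $$ (i,j) = (?\<rho> x * ?\<rho> y) $$ (i,j)"
      unfolding perm_mat_rep_def using ij mult[OF x y nth_mem[OF ij(2)]] by simp
  qed (auto simp: perm_mat_rep_def)
  show ?thesis unfolding is_rep_def using rc r1 rm by auto
qed

lemma perm_mat_rep_eq_one:
  assumes "distinct cs" "\<And>C. C \<in> set cs \<Longrightarrow> \<phi> x C = C"
  shows "perm_mat_rep cs \<phi> x = 1\<^sub>m (length cs)"
  unfolding perm_mat_rep_def using assms by (intro eq_matI) (auto simp: nth_eq_iff_index_eq)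

lemma perm_mat_rep_neq_one:
  assumes "C \<in> set cs" "\<phi> x C \<noteq> C"
  shows "perm_mat_rep cs \<phi> x \<noteq> 1\<^sub>m (length cs)"
proof
  obtain l where l: "l < length cs" "cs ! l = C" using assms(1) by (metis in_set_conv_nth)
  assume "perm_mat_rep cs \<phi> x = 1\<^sub>m (length cs)"
  hence "perm_mat_rep cs \<phi> x $$ (l,l) = 1" using l by simp
  thus False using l assms(2) unfolding perm_mat_rep_def by simp
qed

text \<open>The permutation representation on the cosets of \<open>N\<close>.\<close>

lemma exists_rep_trivial_on_normal:
  fixes G (structure)
  assumes G: "group G" and fin: "finite (carrier G)" and NG: "N \<lhd> G"
    and g: "g \<in> carrier G" "g \<notin> N"
  shows "\<exists>r \<rho>. is_rep G r \<rho> \<and> 0 < r \<and> (\<forall>y\<in>N. \<rho> y = 1\<^sub>m r) \<and> \<rho> g \<noteq> 1\<^sub>m r"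
proof -
  interpret group G by (rule G)
  interpret normal N G by (rule NG)
  have NC: "N \<subseteq> carrier G" by (rule subset)
  have RP: "rcosets N \<subseteq> Pow (carrier G)" by (rule rcosets_subset_PowG[OF subgroup_axioms])
  obtain cs where cs: "set cs = rcosets N" "distinct cs"
    using finite_distinct_list finite_subset[OF RP] fin by (metis finite_Pow_iff)
  have RC: "C \<subseteq> carrier G" if "C \<in> rcosets N" for C using RP that by auto
  have lcos: "\<exists>a\<in>carrier G. C = a <#\<^bsub>G\<^esub> N" if "C \<in> rcosets N" for C
    using that coset_eq unfolding RCOSETS_def by auto
  have closed: "x <#\<^bsub>G\<^esub> C \<in> rcosets N" if C: "C \<in> rcosets N" and x: "x \<in> carrier G" for x C
  proof -
    obtain a where a: "a \<in> carrier G" "C = a <#\<^bsub>G\<^esub> N" using lcos[OF C] by auto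
    have "x <#\<^bsub>G\<^esub> C = N #> (x \<otimes> a)" using lcos_m_assoc[OF NC x a(1)] coset_eq x a by simp
    thus ?thesis using rcosetsI[OF NC] x a by simp
  qed
  have fixed: "y <#\<^bsub>G\<^esub> C = C" if y: "y \<in> N" and C: "C \<in> rcosets N" for y C
  proof -
    obtain a where a: "a \<in> carrier G" "C = a <#\<^bsub>G\<^esub> N" using lcos[OF C] by auto
    have yc: "y \<in> carrier G" using y NC by auto
    have "y <#\<^bsub>G\<^esub> C = (N #> y) #> a"
      using lcos_m_assoc[OF NC yc a(1)] coset_eq yc a coset_mult_assoc[OF NC yc a(1)] by simp
    also have "\<dots> = C" using rcos_const[OF G y] coset_eq a by simp
    finally show ?thesis .
  qed
  define \<rho> where "\<rho> = perm_mat_rep cs (\<lambda>x C. x <#\<^bsub>G\<^esub> C)"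
  have "is_rep G (length cs) \<rho>"
    unfolding \<rho>_def using cs closed lcos_mult_one[OF RC] lcos_m_assoc[OF RC]
    by (intro perm_mat_rep_is_rep) auto
  moreover have "N \<in> set cs" using cs rcosetsI[OF NC, of "\<one>"] coset_mult_one[OF NC] by simp
  moreover have "g <#\<^bsub>G\<^esub> N \<noteq> N" using g one_closed unfolding l_coset_def by force
  ultimately show ?thesis
    unfolding \<rho>_def using perm_mat_rep_eq_one[OF cs(2)] perm_mat_rep_neq_one fixed cs(1)
    by (metis length_pos_if_in_set)
qed

section \<open>Characters and the center\<close>

lemma center_normal:
  fixes G (structure)
  assumes G: "group G"
  shows "grp_center G \<lhd> G"
proof -
  interpret group G by (rule G)
  have sub: "subgroup (grp_center G) G"
  proof (rule subgroupI)
    show "grp_center G \<subseteq> carrier G" unfolding grp_center_def by auto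
    show "grp_center G \<noteq> {}" unfolding grp_center_def by (auto intro!: exI[of _ \<one>])
    fix a assume a: "a \<in> grp_center G"
    hence ac: "a \<in> carrier G" and ca: "\<forall>x\<in>carrier G. x \<otimes> a = a \<otimes> x" unfolding grp_center_def by auto
    have "x \<otimes> inv a = inv a \<otimes> x" if x: "x \<in> carrier G" for x
    proof -
      have "x \<otimes> inv a = inv a \<otimes> (a \<otimes> x) \<otimes> inv a" using ac x by (simp add: m_assoc[symmetric])
      also have "\<dots> = inv a \<otimes> (x \<otimes> a) \<otimes> inv a" using ca x by simp
      also have "\<dots> = inv a \<otimes> x" using ac x by (simp add: m_assoc)
      finally show ?thesis .
    qed
    thus "inv a \<in> grp_center G" unfolding grp_center_def using ac by auto
    fix b assume b: "b \<in> grp_center G"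
    hence bc: "b \<in> carrier G" and cb: "\<forall>x\<in>carrier G. x \<otimes> b = b \<otimes> x" unfolding grp_center_def by auto
    have "x \<otimes> (a \<otimes> b) = (a \<otimes> b) \<otimes> x" if x: "x \<in> carrier G" for x
    proof -
      have "x \<otimes> (a \<otimes> b) = (x \<otimes> a) \<otimes> b" using x ac bc by (simp add: m_assoc)
      also have "\<dots> = a \<otimes> (x \<otimes> b)" using ca x ac bc by (simp add: m_assoc)
      also have "\<dots> = a \<otimes> (b \<otimes> x)" using cb x by simp
      also have "\<dots> = (a \<otimes> b) \<otimes> x" using x ac bc by (simp add: m_assoc)
      finally show ?thesis .
    qed
    thus "a \<otimes> b \<in> grp_center G" unfolding grp_center_def using ac bc by auto
  qed
  show ?thesis unfolding normal_inv_iff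
  proof (intro conjI sub ballI)
    fix x h assume x: "x \<in> carrier G" and h: "h \<in> grp_center G"
    hence "x \<otimes> h \<otimes> inv x = h" unfolding grp_center_def by (simp add: m_assoc)
    thus "x \<otimes> h \<otimes> inv x \<in> grp_center G" using h by simp
  qed
qed

lemma eq_smult_one_mat_if_eigen:
  fixes A :: "'a::comm_ring_1 mat"
  assumes A: "A \<in> carrier_mat n n" and ev: "\<And>w. w \<in> carrier_vec n \<Longrightarrow> A *\<^sub>v w = \<mu> \<cdot>\<^sub>v w"
  shows "A = \<mu> \<cdot>\<^sub>m 1\<^sub>m n"
proof (rule eq_matI)
  fix i j assume "i < dim_row (\<mu> \<cdot>\<^sub>m 1\<^sub>m n)" "j < dim_col (\<mu> \<cdot>\<^sub>m 1\<^sub>m n)"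
  hence ij: "i < n" "j < n" by auto
  have "(A *\<^sub>v unit_vec n j) $ i = (\<Sum>l = 0..<n. A $$ (i, l) * (if l = j then 1 else 0))"
    using A ij by (simp add: mult_mat_vec_def scalar_prod_def unit_vec_def)
  also have "\<dots> = A $$ (i,j)" using ij by (simp add: if_distrib cong: if_cong)
  finally show "A $$ (i,j) = (\<mu> \<cdot>\<^sub>m 1\<^sub>m n) $$ (i,j)"
    using ev[of "unit_vec n j"] ij by simp
qed (use A in auto)

lemma irr_rep_central_scalar:
  fixes G (structure)
  assumes irr: "irr_rep G n \<rho>" and z: "z \<in> grp_center G"
  shows "\<exists>\<mu>. \<rho> z = \<mu> \<cdot>\<^sub>m 1\<^sub>m n"
proof -
  have r: "is_rep G n \<rho>" and n0: "n > 0"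
    and ir: "\<forall>W. invariant_subspace G n \<rho> W \<longrightarrow> W = {0\<^sub>v n} \<or> W = carrier_vec n"
    using irr unfolding irr_rep_def by auto
  have zc: "z \<in> carrier G" and comm: "\<forall>x\<in>carrier G. x \<otimes> z = z \<otimes> x"
    using z unfolding grp_center_def by auto
  have Z: "\<rho> z \<in> carrier_mat n n" using rep_carrier[OF r zc] .
  obtain \<mu> where "\<mu> \<in> spectrum (\<rho> z)" using spectrum_non_empty[OF Z n0] by auto
  then obtain v where v: "v \<in> carrier_vec n" "v \<noteq> 0\<^sub>v n" "\<rho> z *\<^sub>v v = \<mu> \<cdot>\<^sub>v v"
    unfolding spectrum_def eigenvalue_def eigenvector_def using Z by auto
  define W where "W = {w \<in> carrier_vec n. \<rho> z *\<^sub>v w = \<mu> \<cdot>\<^sub>v w}"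
  have "invariant_subspace G n \<rho> W"
    unfolding invariant_subspace_def
  proof (intro conjI ballI allI)
    show "W \<subseteq> carrier_vec n" "0\<^sub>v n \<in> W" unfolding W_def using Z by auto
    fix x assume "x \<in> W"
    hence xc: "x \<in> carrier_vec n" and ex: "\<rho> z *\<^sub>v x = \<mu> \<cdot>\<^sub>v x" unfolding W_def by auto
    show "x + y \<in> W" if "y \<in> W" for y
      using that xc ex mult_add_distrib_mat_vec[OF Z xc] unfolding W_def
      by (auto simp: smult_add_distrib_vec)
    show "c \<cdot>\<^sub>v x \<in> W" for c
      using xc ex mult_mat_vec[OF Z xc] unfolding W_def by (simp add: smult_smult_assoc mult.commute)
    fix g assume g: "g \<in> carrier G"
    have gc: "\<rho> g \<in> carrier_mat n n" using rep_carrier[OF r g] .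
    have "\<rho> z * \<rho> g = \<rho> g * \<rho> z" using rep_mult[OF r zc g] rep_mult[OF r g zc] comm g by simp
    hence "\<rho> z *\<^sub>v (\<rho> g *\<^sub>v x) = \<rho> g *\<^sub>v (\<rho> z *\<^sub>v x)"
      using assoc_mult_mat_vec[OF Z gc xc] assoc_mult_mat_vec[OF gc Z xc] by simp
    also have "\<dots> = \<mu> \<cdot>\<^sub>v (\<rho> g *\<^sub>v x)" unfolding ex using mult_mat_vec[OF gc xc] .
    finally show "\<rho> g *\<^sub>v x \<in> W" unfolding W_def using gc xc by simp
  qed
  moreover have "v \<in> W" unfolding W_def using v by simp
  ultimately have "W = carrier_vec n" using ir v(2) by auto
  hence "\<rho> z = \<mu> \<cdot>\<^sub>m 1\<^sub>m n" using eq_smult_one_mat_if_eigen[OF Z] unfolding W_def by blast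
  thus ?thesis by blast
qed

lemma center_subset_char_center:
  fixes G (structure)
  assumes G: "group G" and fin: "finite (carrier G)" and irr: "irr_rep G d \<sigma>"
  shows "grp_center G \<subseteq> char_center G (\<lambda>x. mat_trace (\<sigma> x))"
proof
  fix z assume z: "z \<in> grp_center G"
  have r: "is_rep G d \<sigma>" and d0: "d > 0" using irr unfolding irr_rep_def by auto
  have zc: "z \<in> carrier G" using z unfolding grp_center_def by auto
  obtain \<mu> where sz: "\<sigma> z = \<mu> \<cdot>\<^sub>m 1\<^sub>m d" using irr_rep_central_scalar[OF irr z] by auto
  obtain m where "0 < m" "\<sigma> z ^\<^sub>m m = 1\<^sub>m d" using rep_finite_order[OF G fin r zc] .
  hence "cmod \<mu> = 1" using scalar_mat_pow_eq_one[of \<mu> d m] sz d0 norm_eq_1_if_power_eq_1 by auto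
  hence "cmod (mat_trace (\<sigma> z)) = d" unfolding sz mat_trace_smult_one by (simp add: norm_mult)
  thus "z \<in> char_center G (\<lambda>x. mat_trace (\<sigma> x))"
    unfolding char_center_def using zc rep_one[OF r] mat_trace_one by simp
qed

lemma exists_noncentral_commutator:
  fixes G (structure)
  assumes G: "group G" and Z2: "second_center G = grp_center G"
    and g: "g \<in> carrier G" "g \<notin> grp_center G"
  shows "\<exists>x\<in>carrier G. x \<otimes> g \<otimes> inv (g \<otimes> x) \<notin> grp_center G"
proof -
  interpret group G by (rule G)
  define Z where "Z = grp_center G"
  interpret normal Z G unfolding Z_def by (rule center_normal[OF G])
  have "Z #> g \<notin> grp_center (G Mod Z)"
    using g Z2 unfolding second_center_def Z_def by auto
  moreover have "Z #> g \<in> carrier (G Mod Z)" using g unfolding carrier_FactGroup by auto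
  ultimately obtain x where x: "x \<in> carrier G" and ne: "Z #> (x \<otimes> g) \<noteq> Z #> (g \<otimes> x)"
    unfolding grp_center_def carrier_FactGroup mult_FactGroup using rcos_sum g(1) by auto
  have "x \<otimes> g \<otimes> inv (g \<otimes> x) \<notin> Z"
  proof
    assume "x \<otimes> g \<otimes> inv (g \<otimes> x) \<in> Z"
    hence "x \<otimes> g \<in> Z #> (g \<otimes> x)" using rcos_module[OF G] x g(1) by simp
    hence "Z #> (g \<otimes> x) = Z #> (x \<otimes> g)" using repr_independence subgroup_axioms x g(1) by simp
    thus False using ne by simp
  qed
  thus ?thesis using x unfolding Z_def by blast
qed

lemma char_kernel_contains_noncentral_normal:
  fixes G (structure)
  assumes G: "group G" and fin: "finite (carrier G)" and Z2: "second_center G = grp_center G"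
    and chi: "irr_char G \<chi>" and X: "grp_center G \<subset> char_center G \<chi>"
  shows "\<exists>N. N \<lhd> G \<and> \<not> N \<subseteq> grp_center G \<and> N \<subseteq> char_ker G \<chi>"
proof -
  interpret group G by (rule G)
  obtain n \<rho> where irr: "irr_rep G n \<rho>" and chi_eq: "\<forall>g\<in>carrier G. \<chi> g = mat_trace (\<rho> g)"
    using chi unfolding irr_char_def by auto
  have r: "is_rep G n \<rho>" using irr unfolding irr_rep_def by auto
  have chi1: "\<chi> \<one> = of_nat n" using chi_eq rep_one[OF r] mat_trace_one by simp
  obtain g where g: "g \<in> char_center G \<chi>" "g \<notin> grp_center G" using X by auto
  have gc: "g \<in> carrier G" using g unfolding char_center_def by auto
  have "complex_of_real (cmod (mat_trace (\<rho> g))) = complex_of_real (real n)"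
    using g(1) gc chi1 chi_eq unfolding char_center_def by simp
  hence "cmod (mat_trace (\<rho> g)) = n" by (simp only: of_real_eq_iff)
  moreover obtain m where "0 < m" "\<rho> g ^\<^sub>m m = 1\<^sub>m n" using rep_finite_order[OF G fin r gc] .
  ultimately obtain c where rg: "\<rho> g = c \<cdot>\<^sub>m 1\<^sub>m n"
    using finite_order_mat_trace_norm[OF rep_carrier[OF r gc]] by auto
  obtain x where x: "x \<in> carrier G" and xZ: "x \<otimes> g \<otimes> inv (g \<otimes> x) \<notin> grp_center G"
    using exists_noncentral_commutator[OF G Z2 gc g(2)] by blast
  have rx: "\<rho> x \<in> carrier_mat n n" using rep_carrier[OF r x] .
  have "\<rho> (x \<otimes> g) = \<rho> (g \<otimes> x)"
    using rep_mult[OF r x gc] rep_mult[OF r gc x] rg rx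
      mult_smult_distrib[OF rx one_carrier_mat] mult_smult_assoc_mat[OF one_carrier_mat rx]
    by simp
  have gx: "g \<otimes> x \<in> carrier G" using gc x by simp
  have "\<rho> (x \<otimes> g \<otimes> inv (g \<otimes> x)) = \<rho> (x \<otimes> g) * \<rho> (inv (g \<otimes> x))"
    using rep_mult[OF r] x gc by simp
  also have "\<dots> = 1\<^sub>m n" unfolding \<open>\<rho> (x \<otimes> g) = \<rho> (g \<otimes> x)\<close>
    using rep_mult[OF r gx, of "inv (g \<otimes> x)"] gx rep_one[OF r] by simp
  finally have "\<rho> (x \<otimes> g \<otimes> inv (g \<otimes> x)) = 1\<^sub>m n" .
  hence "x \<otimes> g \<otimes> inv (g \<otimes> x) \<in> rep_kernel G n \<rho>" unfolding rep_kernel_def using gx x gc by simp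
  hence "\<not> rep_kernel G n \<rho> \<subseteq> grp_center G" using xZ by auto
  moreover have "rep_kernel G n \<rho> \<subseteq> char_ker G \<chi>"
    unfolding rep_kernel_def char_ker_def using chi_eq chi1 mat_trace_one by auto
  ultimately show ?thesis using rep_kernel_normal[OF G r] by blast
qed

lemma exists_char_separating_from_noncentral_normal:
  fixes G (structure)
  assumes G: "group G" and fin: "finite (carrier G)" and NG: "N \<lhd> G"
    and NZ: "\<not> N \<subseteq> grp_center G" and g: "g \<in> carrier G" "g \<notin> N"
  shows "\<exists>\<chi>. irr_char G \<chi> \<and> grp_center G \<subset> char_center G \<chi> \<and> g \<notin> char_ker G \<chi>"
proof -
  interpret group G by (rule G)
  have NC: "N \<subseteq> carrier G" using NG normal_imp_subgroup subgroup.subset by blast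
  obtain d \<sigma> where irr: "irr_rep G d \<sigma>" and ker: "\<forall>y\<in>N. \<sigma> y = 1\<^sub>m d" and gne: "\<sigma> g \<noteq> 1\<^sub>m d"
    using exists_rep_trivial_on_normal[OF G fin NG g] exists_irr_rep_separating[OF G fin NC g(1)]
    by metis
  have r: "is_rep G d \<sigma>" using irr unfolding irr_rep_def by auto
  define \<chi> where "\<chi> x = mat_trace (\<sigma> x)" for x
  have chi1: "\<chi> \<one> = of_nat d" unfolding \<chi>_def using rep_one[OF r] mat_trace_one by simp
  have "g \<notin> char_ker G \<chi>"
  proof
    assume "g \<in> char_ker G \<chi>"
    hence "mat_trace (\<sigma> g) = of_nat d" unfolding char_ker_def using chi1 \<chi>_def by simp
    moreover obtain m where "0 < m" "\<sigma> g ^\<^sub>m m = 1\<^sub>m d" using rep_finite_order[OF G fin r g(1)] .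
    ultimately show False using finite_order_mat_trace_eq_dim[OF rep_carrier[OF r g(1)]] gne by auto
  qed
  moreover have "N \<subseteq> char_center G \<chi>"
    using ker NC chi1 mat_trace_one unfolding char_center_def \<chi>_def by auto
  hence "grp_center G \<subset> char_center G \<chi>"
    using center_subset_char_center[OF G fin irr] NZ unfolding \<chi>_def by auto
  moreover have "irr_char G \<chi>" unfolding irr_char_def \<chi>_def using irr by blast
  ultimately show ?thesis by blast
qed

lemma K_grp_eq_Inter_noncentral_normal:
  fixes G (structure)
  assumes G: "group G" and fin: "finite (carrier G)"
    and Zne: "grp_center G \<noteq> carrier G" and Z2: "second_center G = grp_center G"
  shows "K_grp G = carrier G \<inter> \<Inter> {N. N \<lhd> G \<and> \<not> N \<subseteq> grp_center G}"
proof -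
  have K: "K_grp G = carrier G \<inter>
      \<Inter> {char_ker G \<chi> | \<chi>. irr_char G \<chi> \<and> grp_center G \<subset> char_center G \<chi>}"
    unfolding K_grp_def using Zne by simp
  have "x \<in> N" if "x \<in> K_grp G" "N \<lhd> G" "\<not> N \<subseteq> grp_center G" for x N
    using exists_char_separating_from_noncentral_normal[OF G fin that(2,3), of x] that(1)
    unfolding K by blast
  moreover have "x \<in> char_ker G \<chi>"
    if "x \<in> \<Inter> {N. N \<lhd> G \<and> \<not> N \<subseteq> grp_center G}" "irr_char G \<chi>"
      "grp_center G \<subset> char_center G \<chi>" for x \<chi>
    using char_kernel_contains_noncentral_normal[OF G fin Z2 that(2,3)] that(1) by blast
  ultimately show ?thesis unfolding K by blast
qed

lemma (in group) normal_Inter: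
  assumes "F \<noteq> {}" and "\<And>N. N \<in> F \<Longrightarrow> N \<lhd> G"
  shows "\<Inter>F \<lhd> G"
proof -
  have "subgroup (\<Inter>F) G" by (rule subgroups_Inter) (use assms normal_imp_subgroup in auto)
  moreover have "x \<otimes> h \<otimes> inv x \<in> \<Inter>F" if "x \<in> carrier G" "h \<in> \<Inter>F" for x h
    using that normal.inv_op_closed2[OF assms(2)] by blast
  ultimately show ?thesis unfolding normal_inv_iff by blast
qed

lemma exists_minimal_member_below:
  assumes fin: "\<And>M. M \<in> F \<Longrightarrow> finite M" and "M \<in> F"
  shows "\<exists>M'\<in>F. M' \<subseteq> M \<and> (\<forall>M''\<in>F. M'' \<subseteq> M' \<longrightarrow> M'' = M')"
  using assms(2)
proof (induction "card M" arbitrary: M rule: less_induct)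
  case less
  show ?case
  proof (cases "\<forall>M''\<in>F. M'' \<subseteq> M \<longrightarrow> M'' = M")
    case True
    thus ?thesis using less.prems by blast
  next
    case False
    then obtain M'' where M'': "M'' \<in> F" "M'' \<subset> M" by blast
    have "card M'' < card M" by (rule psubset_card_mono[OF fin[OF less.prems] M''(2)])
    then obtain M' where "M' \<in> F" "M' \<subseteq> M''" "\<forall>L\<in>F. L \<subseteq> M' \<longrightarrow> L = M'"
      using less.hyps M''(1) by blast
    thus ?thesis using M''(2) by blast
  qed
qed

lemma unique_minimal_iff_Inter_mem:
  assumes fin: "\<And>M. M \<in> F \<Longrightarrow> finite M"
  shows "(\<exists>!N. N \<in> F \<and> (\<forall>M\<in>F. M \<subseteq> N \<longrightarrow> M = N)) \<longleftrightarrow> \<Inter>F \<in> F"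
proof
  assume "\<Inter>F \<in> F"
  show "\<exists>!N. N \<in> F \<and> (\<forall>M\<in>F. M \<subseteq> N \<longrightarrow> M = N)"
  proof (rule ex1I[of _ "\<Inter>F"])
    show "\<Inter>F \<in> F \<and> (\<forall>M\<in>F. M \<subseteq> \<Inter>F \<longrightarrow> M = \<Inter>F)"
      using \<open>\<Inter>F \<in> F\<close> Inter_lower by blast
    show "N = \<Inter>F" if "N \<in> F \<and> (\<forall>M\<in>F. M \<subseteq> N \<longrightarrow> M = N)" for N
      using that \<open>\<Inter>F \<in> F\<close> Inter_lower by blast
  qed
next
  assume "\<exists>!N. N \<in> F \<and> (\<forall>M\<in>F. M \<subseteq> N \<longrightarrow> M = N)"
  then obtain N where N: "N \<in> F \<and> (\<forall>M\<in>F. M \<subseteq> N \<longrightarrow> M = N)"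
    and unique: "\<forall>N'. N' \<in> F \<and> (\<forall>M\<in>F. M \<subseteq> N' \<longrightarrow> M = N') \<longrightarrow> N' = N"
    by (rule ex1E)
  have "N \<subseteq> M" if M: "M \<in> F" for M
    using exists_minimal_member_below[OF fin M] unique by blast
  hence "\<Inter>F = N" using N by blast
  thus "\<Inter>F \<in> F" using N by blast
qed

theorem theoremB:
  fixes G :: "('a, 'b) monoid_scheme"
  assumes "group G" and "finite (carrier G)"
    and "grp_center G \<noteq> carrier G"
    and "second_center G = grp_center G"
  shows "K_grp G = carrier G \<inter> \<Inter> {N. N \<lhd> G \<and> \<not> N \<subseteq> grp_center G} \<and>
         ((\<not> K_grp G \<subseteq> grp_center G) \<longleftrightarrow>
           (\<exists>!N. N \<lhd> G \<and> \<not> N \<subseteq> grp_center G \<and>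
                 (\<forall>M. M \<lhd> G \<and> \<not> M \<subseteq> grp_center G \<and> M \<subseteq> N \<longrightarrow> M = N)))"
proof -
  note G = assms(1) and fin = assms(2) and Zne = assms(3)
  define NC where "NC = {N. N \<lhd> G \<and> \<not> N \<subseteq> grp_center G}"
  have part1: "K_grp G = carrier G \<inter> \<Inter>NC"
    unfolding NC_def by (rule K_grp_eq_Inter_noncentral_normal[OF assms])
  have "grp_center G \<subseteq> carrier G" unfolding grp_center_def by auto
  hence "carrier G \<in> NC" using group.normal_self[OF G] Zne unfolding NC_def by auto
  hence K_Inter: "K_grp G = \<Inter>NC" unfolding part1 by blast
  have "K_grp G \<lhd> G"
    unfolding K_Inter by (rule group.normal_Inter[OF G]) (use \<open>carrier G \<in> NC\<close> in \<open>auto simp: NC_def\<close>)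
  hence "(\<not> K_grp G \<subseteq> grp_center G) \<longleftrightarrow> \<Inter>NC \<in> NC" unfolding K_Inter NC_def by simp
  also have "\<dots> \<longleftrightarrow> (\<exists>!N. N \<in> NC \<and> (\<forall>M\<in>NC. M \<subseteq> N \<longrightarrow> M = N))"
  proof (rule unique_minimal_iff_Inter_mem[symmetric])
    fix M assume "M \<in> NC"
    hence "M \<subseteq> carrier G" unfolding NC_def using normal_imp_subgroup subgroup.subset by blast
    thus "finite M" using fin finite_subset by blast
  qed
  also have "\<dots> \<longleftrightarrow> (\<exists>!N. N \<lhd> G \<and> \<not> N \<subseteq> grp_center G \<and>
                 (\<forall>M. M \<lhd> G \<and> \<not> M \<subseteq> grp_center G \<and> M \<subseteq> N \<longrightarrow> M = N))"
    unfolding NC_def by (simp add: imp_conjL)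
  finally show ?thesis using part1 unfolding NC_def by (intro conjI)
qed

end
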